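(* Let $k\ge1$ be an integer and for $\mathbf{x}=(x_1,\dots,x_k)$ with $x_i\ge 1$ and $\mathbf{y}=(y_1,\dots,y_k)$ with $y_i\ge 0$, not all zero, define $$G(\mathbf{x},\mathbf{y})=\frac{\sum_{i=1}^k y_i\left(1-\frac{1}{x_i}\right)}{\sum_{i=1}^k y_i\prod_{j=i+1}^k x_j}.$$ Then $\min_{\mathbf{y}}\sup_{\mathbf{x}}G(\mathbf{x},\mathbf{y})=\frac{1}{k}$.
   Context: The empty product (for $i=k$) equals $1$. *)

theory Defs
  imports Complex_Main
begin

text \<open>Vectors in R^k are represented as functions nat => real, indexed by 1..k.\<close>

definition G :: "nat \<Rightarrow> (nat \<Rightarrow> real) \<Rightarrow> (nat \<Rightarrow> real) \<Rightarrow> real" where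
  "G k x y = (\<Sum>i=1..k. y i * (1 - 1 / x i)) / (\<Sum>i=1..k. y i * (\<Prod>j=i+1..k. x j))"

definition admissible_x :: "nat \<Rightarrow> (nat \<Rightarrow> real) set" where
  "admissible_x k = {x. \<forall>i\<in>{1..k}. 1 \<le> x i}"

definition admissible_y :: "nat \<Rightarrow> (nat \<Rightarrow> real) set" where
  "admissible_y k = {y. (\<forall>i\<in>{1..k}. 0 \<le> y i) \<and> (\<exists>i\<in>{1..k}. y i \<noteq> 0)}"

definition supG :: "nat \<Rightarrow> (nat \<Rightarrow> real) \<Rightarrow> real" where
  "supG k y = (SUP x\<in>admissible_x k. G k x y)"

end

theory Submission
  imports Defs
begin

(* The value 1/k is attained at the weight vector y_i = i and cannot be beaten.
   Both directions revolve around the "harmonic point" x_j = j/(j-1) (j >= 2), whose tail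
   products telescope: prod_{j=i+1..k} j/(j-1) = k/i.
   Upper bound for y_i = i: write every x_j (j >= 2) as (j/(j-1)) * exp r_j, where r_j is
   the logarithmic excess of x_j over the harmonic point.  Then ln z <= z - 1 gives
   i (1 - 1/x_i) <= 1 + (i-1) r_i, while exp s >= 1 + s gives
   k (1 + sum_{j>i} r_j) <= i prod_{j>i} x_j; summing over i, the two r-sums agree after
   exchanging the order of summation, so k * numerator <= denominator, i.e. G <= 1/k.
   Lower bound for arbitrary admissible y: at the harmonic point with x_1 = t the quotient
   equals 1/k - y_1 / (t k A) with A = sum_i y_i / i > 0, which tends to 1/k as t grows.
   Since G <= 1 always, the supremum is a genuine real supremum, and the theorem follows. *)

lemma harmonic_tail_prod:
  assumes "1 \<le> i" "i \<le> k"
  shows "(\<Prod>j=i+1..k. real j / (real j - 1)) = real k / real i"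
  using assms
proof (induction k)
  case 0
  then show ?case by simp
next
  case (Suc k)
  show ?case
  proof (cases "i = Suc k")
    case False
    then have "i \<le> k" using Suc.prems by simp
    then have "(\<Prod>j=i+1..Suc k. real j / (real j - 1))
               = real (Suc k) / real k * (real k / real i)"
      using Suc by simp
    also have "\<dots> = real (Suc k) / real i" using \<open>i \<le> k\<close> Suc.prems by simp
    finally show ?thesis .
  qed simp
qed

lemma sum_of_tail_sums:
  "(\<Sum>i=1..k. \<Sum>j=i+1..k. (r :: nat \<Rightarrow> real) j) = (\<Sum>i=1..k. (real i - 1) * r i)"
proof (induction k)
  case 0
  then show ?case by simp
next
  case (Suc k)
  have "(\<Sum>i=1..Suc k. \<Sum>j=i+1..Suc k. r j) = (\<Sum>i=1..k. \<Sum>j=i+1..Suc k. r j)"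
    by simp
  also have "\<dots> = (\<Sum>i=1..k. (\<Sum>j=i+1..k. r j) + r (Suc k))"
    by (rule sum.cong) auto
  also have "\<dots> = (\<Sum>i=1..k. \<Sum>j=i+1..k. r j) + real k * r (Suc k)"
    by (simp add: sum.distrib)
  finally show ?case using Suc.IH by simp
qed

definition log_excess :: "(nat \<Rightarrow> real) \<Rightarrow> nat \<Rightarrow> real" where
  "log_excess x j = ln (x j * (real j - 1) / real j)"

lemma log_excess_factor:
  assumes "2 \<le> j" "1 \<le> x j"
  shows "x j = real j / (real j - 1) * exp (log_excess x j)"
proof -
  have "x j * (real j - 1) / real j > 0" using assms by auto
  then have "exp (log_excess x j) = x j * (real j - 1) / real j"
    unfolding log_excess_def by simp
  then show ?thesis using assms(1) by (simp add: field_simps)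
qed

lemma tail_prod_log_excess:
  assumes x: "x \<in> admissible_x k" and i: "1 \<le> i" "i \<le> k"
  shows "(\<Prod>j=i+1..k. x j) = real k / real i * exp (\<Sum>j=i+1..k. log_excess x j)"
proof -
  have "(\<Prod>j=i+1..k. x j) = (\<Prod>j=i+1..k. real j / (real j - 1) * exp (log_excess x j))"
    using x i unfolding admissible_x_def by (intro prod.cong refl log_excess_factor) auto
  also have "\<dots> = (\<Prod>j=i+1..k. real j / (real j - 1)) * exp (\<Sum>j=i+1..k. log_excess x j)"
    by (simp only: prod.distrib exp_sum[OF finite_atLeastAtMost])
  finally show ?thesis using harmonic_tail_prod[OF i] by simp
qed

text \<open>Numerator term bound, from ln z \<le> z - 1.  (For i = 1 the excess term vanishes.)\<close>
lemma numerator_term_bound: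
  assumes i: "1 \<le> i" and a: "1 \<le> (a :: real)"
  shows "real i * (1 - 1 / a) \<le> 1 + (real i - 1) * ln (a * (real i - 1) / real i)"
proof (cases "i = 1")
  case True
  then show ?thesis using a by simp
next
  case False
  define z where "z = a * (real i - 1) / real i"
  have i2: "2 \<le> i" using i False by simp
  then have z: "z > 0" using a unfolding z_def by auto
  have "ln (1 / z) \<le> 1 / z - 1" using z by (intro ln_le_minus_one) auto
  then have "1 - ln z \<le> 1 / z" using z by (simp add: ln_div)
  then have "(real i - 1) * (1 - ln z) \<le> (real i - 1) * (1 / z)"
    using i2 by (intro mult_left_mono) auto
  also have "\<dots> = real i / a" using a i2 unfolding z_def by (simp add: field_simps)
  finally show ?thesis unfolding z_def[symmetric] by (simp add: algebra_simps)
qed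

text \<open>Denominator term bound, from exp s \<ge> 1 + s.\<close>
lemma denominator_term_bound:
  assumes x: "x \<in> admissible_x k" and i: "1 \<le> i" "i \<le> k"
  shows "real k * (1 + (\<Sum>j=i+1..k. log_excess x j)) \<le> real i * (\<Prod>j=i+1..k. x j)"
proof -
  have "real k * (1 + (\<Sum>j=i+1..k. log_excess x j)) \<le> real k * exp (\<Sum>j=i+1..k. log_excess x j)"
    by (intro mult_left_mono exp_ge_add_one_self) simp
  also have "\<dots> = real i * (\<Prod>j=i+1..k. x j)" using tail_prod_log_excess[OF x i] i by simp
  finally show ?thesis .
qed

lemma identity_weights_bound:
  assumes x: "x \<in> admissible_x k"
  shows "real k * (\<Sum>i=1..k. real i * (1 - 1 / x i)) \<le> (\<Sum>i=1..k. real i * (\<Prod>j=i+1..k. x j))"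
proof -
  let ?r = "log_excess x"
  have "real k * (\<Sum>i=1..k. real i * (1 - 1 / x i)) \<le> real k * (\<Sum>i=1..k. 1 + (real i - 1) * ?r i)"
    using x unfolding admissible_x_def log_excess_def
    by (intro mult_left_mono sum_mono numerator_term_bound) auto
  also have "\<dots> = (\<Sum>i=1..k. real k * (1 + (\<Sum>j=i+1..k. ?r j)))"
    using sum_of_tail_sums[of ?r k] by (simp add: sum.distrib sum_distrib_left[symmetric])
  also have "\<dots> \<le> (\<Sum>i=1..k. real i * (\<Prod>j=i+1..k. x j))"
    using x by (intro sum_mono denominator_term_bound) auto
  finally show ?thesis .
qed

lemma tail_prod_ge_1: "x \<in> admissible_x k \<Longrightarrow> 1 \<le> (\<Prod>j=i+1..k. x j)"
  unfolding admissible_x_def by (intro prod_ge_1) auto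

lemma denominator_pos:
  assumes y: "y \<in> admissible_y k" and x: "x \<in> admissible_x k"
  shows "0 < (\<Sum>i=1..k. y i * (\<Prod>j=i+1..k. x j))"
proof -
  obtain i0 where i0: "i0 \<in> {1..k}" "y i0 \<noteq> 0" using y unfolding admissible_y_def by auto
  have nonneg: "0 \<le> y i" if "i \<in> {1..k}" for i using y that unfolding admissible_y_def by auto
  have tail_nonneg: "0 \<le> (\<Prod>j=i+1..k. x j)" for i using tail_prod_ge_1[OF x, of i] by linarith
  have "0 < y i0" using i0 nonneg by force
  also have "\<dots> \<le> y i0 * (\<Prod>j=i0+1..k. x j)"
    using tail_prod_ge_1[OF x] \<open>0 < y i0\<close> by simp
  also have "\<dots> \<le> (\<Sum>i=1..k. y i * (\<Prod>j=i+1..k. x j))"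
    using i0 nonneg tail_nonneg by (intro member_le_sum mult_nonneg_nonneg) auto
  finally show ?thesis .
qed

text \<open>G is bounded by 1, so the supremum defining supG is a genuine (bounded) supremum.\<close>
lemma G_le_1:
  assumes y: "y \<in> admissible_y k" and x: "x \<in> admissible_x k"
  shows "G k x y \<le> 1"
proof -
  have "(\<Sum>i=1..k. y i * (1 - 1 / x i)) \<le> (\<Sum>i=1..k. y i * (\<Prod>j=i+1..k. x j))"
  proof (intro sum_mono mult_left_mono)
    fix i assume "i \<in> {1..k}"
    then have "1 \<le> x i" using x unfolding admissible_x_def by auto
    then have "0 \<le> 1 / x i" by simp
    then show "1 - 1 / x i \<le> (\<Prod>j=i+1..k. x j)" using tail_prod_ge_1[OF x, of i] by linarith
    show "0 \<le> y i" using y \<open>i \<in> {1..k}\<close> unfolding admissible_y_def by auto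
  qed
  then show ?thesis using denominator_pos[OF y x] unfolding G_def by simp
qed

lemma G_le_supG: "y \<in> admissible_y k \<Longrightarrow> x \<in> admissible_x k \<Longrightarrow> G k x y \<le> supG k y"
  unfolding supG_def using G_le_1 by (intro cSUP_upper bdd_aboveI[of _ 1]) auto

definition harmonic_point :: "real \<Rightarrow> nat \<Rightarrow> real" where
  "harmonic_point t j = (if j = 1 then t else real j / (real j - 1))"

lemma harmonic_point_admissible: "1 \<le> t \<Longrightarrow> harmonic_point t \<in> admissible_x k"
  unfolding admissible_x_def harmonic_point_def by auto

lemma G_harmonic_point:
  assumes k: "1 \<le> k" and t: "1 \<le> t" and A: "0 < (\<Sum>i=1..k. y i / real i)"
  shows "G k (harmonic_point t) y = 1 / real k - y 1 / (t * real k * (\<Sum>i=1..k. y i / real i))"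
proof -
  define A where "A = (\<Sum>i=1..k. y i / real i)"
  have "(\<Sum>i=1..k. y i * (1 - 1 / harmonic_point t i))
        = (\<Sum>i=1..k. y i / real i - (if i = 1 then y 1 / t else 0))"
    unfolding harmonic_point_def by (intro sum.cong) (auto simp: field_simps)
  also have "\<dots> = A - y 1 / t" unfolding A_def using k by (simp add: sum_subtractf)
  finally have num: "(\<Sum>i=1..k. y i * (1 - 1 / harmonic_point t i)) = A - y 1 / t" .
  have "(\<Sum>i=1..k. y i * (\<Prod>j=i+1..k. harmonic_point t j)) = (\<Sum>i=1..k. real k * (y i / real i))"
  proof (intro sum.cong refl)
    fix i assume i: "i \<in> {1..k}"
    have "(\<Prod>j=i+1..k. harmonic_point t j) = (\<Prod>j=i+1..k. real j / (real j - 1))"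
      using i unfolding harmonic_point_def by (intro prod.cong) auto
    also have "\<dots> = real k / real i" using i by (intro harmonic_tail_prod) auto
    finally have "(\<Prod>j=i+1..k. harmonic_point t j) = real k / real i" .
    then show "y i * (\<Prod>j=i+1..k. harmonic_point t j) = real k * (y i / real i)" by simp
  qed
  then have den: "(\<Sum>i=1..k. y i * (\<Prod>j=i+1..k. harmonic_point t j)) = real k * A"
    unfolding A_def by (simp add: sum_distrib_left)
  have A_pos: "0 < A" using A unfolding A_def .
  show ?thesis
    unfolding G_def num den A_def[symmetric] using A_pos k t by (simp add: field_simps)
qed

text \<open>No admissible weight vector does better than 1/k: let t \<rightarrow> \<infinity> in the closed form above.\<close>
lemma supG_lower_bound:
  assumes k: "1 \<le> k" and y: "y \<in> admissible_y k"
  shows "1 / real k \<le> supG k y"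
proof -
  define A where "A = (\<Sum>i=1..k. y i / real i)"
  have nonneg: "0 \<le> y i" if "i \<in> {1..k}" for i using y that unfolding admissible_y_def by auto
  obtain i0 where i0: "i0 \<in> {1..k}" "y i0 \<noteq> 0" using y unfolding admissible_y_def by auto
  have "0 < y i0 / real i0" using i0 nonneg by force
  also have "\<dots> \<le> A" unfolding A_def using i0 nonneg by (intro member_le_sum) auto
  finally have A: "0 < A" .
  have approx: "1 / real k - y 1 / (t * real k * A) \<le> supG k y" if t: "1 \<le> t" for t
    using G_le_supG[OF y harmonic_point_admissible[OF t]] G_harmonic_point[OF k t] A
    unfolding A_def by simp
  show ?thesis
  proof (rule field_le_epsilon)
    fix e :: real assume e: "0 < e"
    define t where "t = max 1 (y 1 / (real k * A * e))"
    have kA: "0 < real k * A" using k A by simp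
    have t: "1 \<le> t" unfolding t_def by simp
    have "y 1 / (real k * A * e) \<le> t" unfolding t_def by simp
    then have "y 1 \<le> t * (real k * A * e)" using kA e by (simp add: divide_le_eq mult.commute)
    moreover have "0 < t * real k * A" using kA t by (simp add: mult.assoc)
    ultimately have "y 1 / (t * real k * A) \<le> e" by (simp add: divide_le_eq mult_ac)
    then show "1 / real k \<le> supG k y + e" using approx[OF t] by linarith
  qed
qed

theorem theorem4:
  fixes k :: nat
  assumes "1 \<le> k"
  shows "(\<exists>y\<in>admissible_y k. supG k y = 1 / real k) \<and>
         (\<forall>y\<in>admissible_y k. 1 / real k \<le> supG k y)"
proof
  show lower: "\<forall>y\<in>admissible_y k. 1 / real k \<le> supG k y"
    using supG_lower_bound assms by blast
  let ?y = "\<lambda>i. real i"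
  have y: "?y \<in> admissible_y k" unfolding admissible_y_def using assms by auto
  have "G k x ?y \<le> 1 / real k" if x: "x \<in> admissible_x k" for x
    using identity_weights_bound[OF x] denominator_pos[OF y x] assms
    unfolding G_def by (simp add: field_simps)
  then have "supG k ?y \<le> 1 / real k"
    unfolding supG_def admissible_x_def by (intro cSUP_least) auto
  then show "\<exists>y\<in>admissible_y k. supG k y = 1 / real k"
    using lower y by force
qed

end
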